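(* Let $\mathbb{F}$ be a field of characteristic $2$, $V$ a finite-dimensional $\mathbb{F}$-vector space and $b$ a non-degenerate symmetric bilinear form on $V$. Let $x$ be a non-zero vector of $V$ with $b(x,x)=0$, and let $u$ be a $b$-symmetric endomorphism of $V$. The following are equivalent: (i) $u(x)=0$ and $u(\{x\}^\perp) \subset \mathbb{F}x$; (ii) there exist $y \in \{x\}^\perp$ and $\alpha \in \mathbb{F}$ such that $u = \alpha\, x\otimes_b x + x\wedge_b y$. Moreover, if these conditions hold then $u$ is nilpotent and $u^3=0$.
   Context: An endomorphism $u$ of $V$ is $b$-symmetric if $(x,y)\mapsto b(x,u(y))$ is symmetric. $\{x\}^\perp = \{z\in V : b(x,z)=0\}$. For $x,y\in V$, $x\otimes_b x$ is the endomorphism $z\mapsto b(x,z)\,x$, and $x \wedge_b y$ is the endomorphism $z \mapsto b(y,z)\,x - b(x,z)\,y$. *)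

theory Defs
  imports Complex_Main
begin

definition bilinear_form :: "('a::field \<Rightarrow> 'v::ab_group_add \<Rightarrow> 'v) \<Rightarrow> ('v \<Rightarrow> 'v \<Rightarrow> 'a) \<Rightarrow> bool" where
  "bilinear_form scale b \<longleftrightarrow>
     (\<forall>y. Vector_Spaces.linear scale (*) (\<lambda>x. b x y)) \<and>
     (\<forall>x. Vector_Spaces.linear scale (*) (\<lambda>y. b x y))"

definition symmetric_form :: "('v \<Rightarrow> 'v \<Rightarrow> 'a) \<Rightarrow> bool" where
  "symmetric_form b \<longleftrightarrow> (\<forall>x y. b x y = b y x)"

definition nondegenerate_form :: "('v::zero \<Rightarrow> 'v \<Rightarrow> 'a::zero) \<Rightarrow> bool" where
  "nondegenerate_form b \<longleftrightarrow> (\<forall>x. (\<forall>y. b x y = 0) \<longrightarrow> x = 0)"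

definition b_symmetric :: "('v \<Rightarrow> 'v \<Rightarrow> 'a) \<Rightarrow> ('v \<Rightarrow> 'v) \<Rightarrow> bool" where
  "b_symmetric b u \<longleftrightarrow> (\<forall>x y. b x (u y) = b y (u x))"

definition orth :: "('v \<Rightarrow> 'v \<Rightarrow> 'a::zero) \<Rightarrow> 'v \<Rightarrow> 'v set" where
  "orth b x = {z. b x z = 0}"

definition btensor :: "('a \<Rightarrow> 'v \<Rightarrow> 'v) \<Rightarrow> ('v \<Rightarrow> 'v \<Rightarrow> 'a) \<Rightarrow> 'v \<Rightarrow> 'v \<Rightarrow> 'v" where
  "btensor scale b x = (\<lambda>z. scale (b x z) x)"

definition bwedge :: "('a \<Rightarrow> 'v \<Rightarrow> 'v::ab_group_add) \<Rightarrow> ('v \<Rightarrow> 'v \<Rightarrow> 'a) \<Rightarrow> 'v \<Rightarrow> 'v \<Rightarrow> 'v \<Rightarrow> 'v" where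
  "bwedge scale b x y = (\<lambda>z. scale (b y z) x - scale (b x z) y)"

end

theory Submission
  imports Defs
begin

text \<open>
  Since \<open>b\<close> is non-degenerate there is a \<open>w\<close> with \<open>b(x,w) = 1\<close>, and every \<open>z\<close> splits as
  \<open>z = (z - b(x,z) w) + b(x,z) w\<close> with the first summand in \<open>{x}\<^sup>\<bottom>\<close>.
  If \<open>u(x) = 0\<close>, then \<open>b(x, u z) = b(z, u x) = 0\<close>, so \<open>u\<close> maps \<open>V\<close> into \<open>{x}\<^sup>\<bottom>\<close>. If moreover
  \<open>u z' = k x\<close> for \<open>z' \<in> {x}\<^sup>\<bottom>\<close>, then \<open>k = b(w, u z') = b(u w, z')\<close>; evaluating on the splitting
  gives \<open>u = \<alpha> x \<otimes>\<^sub>b x + x \<and>\<^sub>b u(w)\<close> with \<open>\<alpha> = -b(u w, w)\<close>, where characteristic 2 is used only to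
  flip the sign in front of \<open>b(x,z) u(w)\<close>. Conversely \<open>\<alpha> x \<otimes>\<^sub>b x + x \<and>\<^sub>b y\<close> sends \<open>z \<in> {x}\<^sup>\<bottom>\<close>
  to \<open>b(y,z) x\<close>. Finally \<open>u\<^sup>3 = 0\<close> because \<open>u\<close> maps \<open>V\<close> into \<open>{x}\<^sup>\<bottom>\<close>, \<open>{x}\<^sup>\<bottom>\<close> into \<open>\<bbbF>x\<close> and kills \<open>x\<close>.
\<close>

lemma (in vector_space) minus_eq_self_if_CHAR_2:
  fixes v :: 'b
  assumes "CHAR('a) = 2"
  shows "- v = v"
proof -
  have "(1::'a) + 1 = 0"
    using of_nat_CHAR[where 'a='a] assms by simp
  then have "v + v = 0"
    using scale_left_distrib[of 1 1 v] by simp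
  then show ?thesis
    by (simp add: add_eq_0_iff)
qed

locale symmetric_bilinear_space = vector_space scale
  for scale :: "'a::field \<Rightarrow> 'v::ab_group_add \<Rightarrow> 'v" (infixr \<open>*s\<close> 75) +
  fixes b :: "'v \<Rightarrow> 'v \<Rightarrow> 'a"
  assumes bilinear: "bilinear_form scale b"
    and symmetric: "symmetric_form b"
begin

lemma b_commute: "b p q = b q p"
  using symmetric unfolding symmetric_form_def by blast

lemma b_add_right: "b r (p + q) = b r p + b r q"
  and b_scale_right: "b r (c *s p) = c * b r p"
  using bilinear unfolding bilinear_form_def Vector_Spaces.linear_iff by auto

lemma b_zero_right [simp]: "b r 0 = 0"
  using b_scale_right[of r 0 0] by simp

lemma b_diff_right: "b r (p - q) = b r p - b r q"
  using b_add_right[of r "p - q" q] by (simp add: eq_diff_eq)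

lemma exists_b_dual:
  assumes "nondegenerate_form b" and "x \<noteq> 0"
  obtains w where "b x w = 1"
proof -
  obtain w0 where "b x w0 \<noteq> 0"
    using assms unfolding nondegenerate_form_def by blast
  then have "b x (inverse (b x w0) *s w0) = 1"
    by (simp add: b_scale_right)
  then show thesis ..
qed

lemma b_symmetric_kernel_orth:
  assumes "b_symmetric b u" and "u x = 0"
  shows "u z \<in> orth b x"
proof -
  have "b x (u z) = b z (u x)"
    using assms(1) unfolding b_symmetric_def by blast
  then show ?thesis
    using assms(2) unfolding orth_def by simp
qed

lemma tensor_wedge_apply_orth:
  assumes "z \<in> orth b x"
  shows "\<alpha> *s btensor scale b x z + bwedge scale b x y z = b y z *s x"
  using assms unfolding orth_def btensor_def bwedge_def by simp

lemma tensor_wedge_imp_orth_to_line: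
  assumes "b x x = 0" and "y \<in> orth b x"
    and "u = (\<lambda>z. \<alpha> *s btensor scale b x z + bwedge scale b x y z)"
  shows "u x = 0 \<and> u ` orth b x \<subseteq> range (\<lambda>c. c *s x)"
proof -
  have "x \<in> orth b x" and "b y x = 0"
    using assms(1,2) b_commute[of y x] unfolding orth_def by simp_all
  then show ?thesis
    using assms(3) tensor_wedge_apply_orth by auto
qed

lemma orth_to_line_imp_tensor_wedge:
  assumes CHAR_2: "CHAR('a) = 2" and nondeg: "nondegenerate_form b" and "x \<noteq> 0"
    and u_lin: "Vector_Spaces.linear scale scale u" and u_sym: "b_symmetric b u"
    and ux: "u x = 0" and u_orth: "u ` orth b x \<subseteq> range (\<lambda>c. c *s x)"
  shows "\<exists>y \<in> orth b x. \<exists>\<alpha>. u = (\<lambda>z. \<alpha> *s btensor scale b x z + bwedge scale b x y z)"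
proof -
  have u_add: "u (p + q) = u p + u q" and u_scale: "u (c *s p) = c *s u p" for p q c
    using u_lin unfolding Vector_Spaces.linear_iff by auto
  obtain w where bxw: "b x w = 1"
    using exists_b_dual nondeg \<open>x \<noteq> 0\<close> .
  define \<alpha> where "\<alpha> = - b (u w) w"
  have "u z = \<alpha> *s btensor scale b x z + bwedge scale b x (u w) z" for z
  proof -
    define c where "c = b x z"
    define z' where "z' = z - c *s w"
    have "z' \<in> orth b x"
      unfolding orth_def z'_def c_def by (simp add: b_diff_right b_scale_right bxw)
    with u_orth obtain k where uz': "u z' = k *s x"
      by blast
    have "b (u w) z' = b w (u z')"
      using u_sym b_commute unfolding b_symmetric_def by metis
    also have "\<dots> = k"
      by (simp add: uz' b_scale_right b_commute[of w] bxw)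
    finally have buwz': "b (u w) z' = k" .
    have z_split: "z = z' + c *s w"
      unfolding z'_def by simp
    have "\<alpha> *s btensor scale b x z + bwedge scale b x (u w) z
        = (\<alpha> * c + b (u w) z) *s x - c *s u w"
      unfolding btensor_def bwedge_def c_def by (simp add: scale_left_distrib)
    also have "\<alpha> * c + b (u w) z = k"
      by (subst z_split) (simp add: b_add_right b_scale_right buwz' \<alpha>_def algebra_simps)
    also have "k *s x - c *s u w = k *s x + c *s u w"
      using minus_eq_self_if_CHAR_2[OF CHAR_2, of "c *s u w"] by (simp only: diff_conv_add_uminus)
    also have "\<dots> = u z"
      by (subst z_split) (simp add: u_add u_scale uz')
    finally show ?thesis ..
  qed
  moreover have "u w \<in> orth b x"
    using b_symmetric_kernel_orth u_sym ux .
  ultimately show ?thesis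
    by blast
qed

lemma orth_to_line_imp_cube_eq_zero:
  assumes u_lin: "Vector_Spaces.linear scale scale u" and u_sym: "b_symmetric b u"
    and ux: "u x = 0" and u_orth: "u ` orth b x \<subseteq> range (\<lambda>c. c *s x)"
  shows "u ^^ 3 = (\<lambda>_. 0)"
proof
  fix z
  have u_scale: "u (c *s p) = c *s u p" for c p
    using u_lin unfolding Vector_Spaces.linear_iff by blast
  obtain k where "u (u z) = k *s x"
    using u_orth b_symmetric_kernel_orth[OF u_sym ux] by blast
  then have "u (u (u z)) = 0"
    by (simp add: u_scale ux)
  then show "(u ^^ 3) z = 0"
    by (simp add: numeral_3_eq_3)
qed

end

theorem proposition4p5:
  fixes scale :: "'a::field \<Rightarrow> 'v::ab_group_add \<Rightarrow> 'v"
    and b :: "'v \<Rightarrow> 'v \<Rightarrow> 'a"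
    and x :: 'v
    and u :: "'v \<Rightarrow> 'v"
  assumes vs: "vector_space scale"
    and findim: "\<exists>B. finite_dimensional_vector_space scale B"
    and char2: "CHAR('a) = 2"
    and bil: "bilinear_form scale b"
    and sym: "symmetric_form b"
    and nondeg: "nondegenerate_form b"
    and x_nz: "x \<noteq> 0"
    and x_iso: "b x x = 0"
    and u_lin: "Vector_Spaces.linear scale scale u"
    and u_sym: "b_symmetric b u"
  shows "((u x = 0 \<and> u ` orth b x \<subseteq> range (\<lambda>c. scale c x)) \<longleftrightarrow>
           (\<exists>y \<in> orth b x. \<exists>\<alpha>. u = (\<lambda>z. scale \<alpha> (btensor scale b x z) + bwedge scale b x y z)))
     \<and> ((u x = 0 \<and> u ` orth b x \<subseteq> range (\<lambda>c. scale c x)) \<longrightarrow>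
           (\<exists>k. u ^^ k = (\<lambda>_. 0)) \<and> u ^^ 3 = (\<lambda>_. 0))"
proof -
  interpret symmetric_bilinear_space scale b
    using vs bil sym
    by (simp add: symmetric_bilinear_space_def symmetric_bilinear_space_axioms_def)
  show ?thesis
    using tensor_wedge_imp_orth_to_line[OF x_iso]
      orth_to_line_imp_tensor_wedge[OF char2 nondeg x_nz u_lin u_sym]
      orth_to_line_imp_cube_eq_zero[OF u_lin u_sym] by blast
qed

end
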